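(* Let $\alpha>2$ and let $K\ge3$ be an integer. Set $C_{2,K}=\frac1K$ if $K$ is even and $C_{2,K}=\frac1K\cdot\frac{K^2}{K^2-1}$ if $K$ is odd. Then for every $p,q\in\operatorname{relint}(\Delta^K)$, the inequality \[ D_\alpha(p\Vert q)\ \ge\ \frac C2\,\|p-q\|_1^2 \] holds with each of the following choices of $C$: (1) $C=C_{2,K}\cdot\left(\min_{k\in[K]}\min\{p_k,q_k\}\right)^{\alpha-2}$; (2) $C=C_{2,K}\cdot\frac{2}{\alpha(\alpha-1)}\cdot\left(\min_{k\in[K]}p_k\right)^{\alpha-2}$; (3) $C=C_{2,K}\cdot\frac{2}{\alpha}\cdot\left(\min_{k\in[K]}q_k\right)^{\alpha-2}$.
   Context: $[K]=\{1,\dots,K\}$, $\Delta^K=\{p\in[0,1]^K:\sum_k p_k=1\}$, $\operatorname{relint}(\Delta^K)=\Delta^K\cap(0,1)^K$. For $p,q\in(0,+\infty)^K$ and $\alpha\notin\{0,1\}$, $D_\alpha(p\Vert q)=\frac1\alpha\sum_{k=1}^K\frac{p_k^\alpha+(\alpha-1)q_k^\alpha-\alpha p_kq_k^{\alpha-1}}{\alpha-1}$, the Bregman divergence of $-S_\alpha$ with $S_\alpha(p)=\frac{\sum_kp_k^\alpha}{\alpha(1-\alpha)}$. $\|x\|_1=\sum_k|x_k|$. *)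

theory Defs
  imports Complex_Main
begin

text \<open>Vectors in R^K are represented as functions nat => real, only the
coordinates 1..K matter.\<close>

definition relint_simplex :: "nat \<Rightarrow> (nat \<Rightarrow> real) set" where
  "relint_simplex K = {p. (\<forall>k\<in>{1..K}. 0 < p k \<and> p k < 1) \<and> (\<Sum>k=1..K. p k) = 1}"

definition alpha_div :: "real \<Rightarrow> nat \<Rightarrow> (nat \<Rightarrow> real) \<Rightarrow> (nat \<Rightarrow> real) \<Rightarrow> real" where
  "alpha_div \<alpha> K p q = (1 / \<alpha>) * (\<Sum>k=1..K.
      (p k powr \<alpha> + (\<alpha> - 1) * q k powr \<alpha> - \<alpha> * p k * q k powr (\<alpha> - 1)) / (\<alpha> - 1))"

definition l1_dist :: "nat \<Rightarrow> (nat \<Rightarrow> real) \<Rightarrow> (nat \<Rightarrow> real) \<Rightarrow> real" where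
  "l1_dist K p q = (\<Sum>k=1..K. \<bar>p k - q k\<bar>)"

definition C2K :: "nat \<Rightarrow> real" where
  "C2K K = (if even K then 1 / real K else (1 / real K) * (real K ^ 2 / (real K ^ 2 - 1)))"

end

(*
  Let B(x, y) = x^\<alpha> - y^\<alpha> - \<alpha> y^(\<alpha>-1) (x - y) be the Bregman divergence of t \<mapsto> t^\<alpha>, so
  that \<alpha>(\<alpha>-1) D_\<alpha>(p||q) = \<Sum>_k B(p_k, q_k). Each of the three constants comes from a pointwise
  bound B(x, y) \<ge> c m^(\<alpha>-2) (x - y)^2: for m = min x y and c = \<alpha>(\<alpha>-1)/2 this is Taylor's
  theorem; for m = x, c = 1 and for m = y, c = \<alpha>-1, homogeneity reduces it to x = 1 resp.
  y = 1, where it holds with equality at \<alpha> = 2 and the difference of the two sides is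
  nondecreasing in the exponent.

  Summing, it remains to show \<Sum>_k d_k^2 \<ge> C_{2,K} ||d||_1^2 for d = p - q, whose entries sum
  to 0. If a entries of d are positive and b = K - a are not, both groups have l1-mass
  ||d||_1 / 2, so Cauchy-Schwarz on each group gives \<Sum>_k d_k^2 \<ge> ||d||_1^2 K / (4 a b);
  finally 4 a b \<le> K^2, and 4 a b \<le> K^2 - 1 when K is odd.
*)
theory Submission
  imports Defs "HOL-Analysis.Convex"
begin

lemma powr_diff_one_mult:
  fixes x a :: real
  assumes "0 < x"
  shows "x powr (a - 1) * x = x powr a"
  using assms powr_add[of x "a - 1" 1] by simp

lemma sub_one_mult_ln_nonneg:
  fixes t :: real
  assumes "0 < t"
  shows "0 \<le> (t - 1) * ln t"
  using assms by (auto simp: zero_le_mult_iff)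

lemma mult_ln_ge_sub_one:
  fixes s :: real
  assumes "0 < s"
  shows "s - 1 \<le> s * ln s"
proof -
  have "- ln s \<le> 1 / s - 1"
    using ln_le_minus_one[of "1 / s"] assms by (simp add: ln_div)
  then have "s * (- ln s) \<le> s * (1 / s - 1)"
    using assms by (intro mult_left_mono) auto
  then show ?thesis using assms by (simp add: algebra_simps)
qed

lemma powr_sub_mult_ln_nonneg:
  fixes s a b :: real
  assumes "0 < s" "a \<le> b"
  shows "0 \<le> (s powr b - s powr a) * ln s"
proof (cases "s \<le> 1")
  case True
  then have "s powr b \<le> s powr a" using assms by (intro powr_mono') auto
  then show ?thesis using True assms by (intro mult_nonpos_nonpos) auto
next
  case False
  then have "s powr a \<le> s powr b" using assms by (intro powr_mono) auto
  then show ?thesis using False by (intro mult_nonneg_nonneg) auto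
qed

definition bregman_powr :: "real \<Rightarrow> real \<Rightarrow> real \<Rightarrow> real" where
  "bregman_powr \<alpha> x y = x powr \<alpha> - y powr \<alpha> - \<alpha> * y powr (\<alpha> - 1) * (x - y)"

lemma bregman_powr_eq:
  assumes "0 < y"
  shows "bregman_powr \<alpha> x y = x powr \<alpha> + (\<alpha> - 1) * y powr \<alpha> - \<alpha> * x * y powr (\<alpha> - 1)"
  using assms by (simp add: bregman_powr_def algebra_simps flip: powr_diff_one_mult[of y \<alpha>])

lemma bregman_powr_scale:
  assumes "0 < c" "0 \<le> x" "0 < y"
  shows "bregman_powr \<alpha> (c * x) (c * y) = c powr \<alpha> * bregman_powr \<alpha> x y"
  using assms
  by (simp add: bregman_powr_def powr_mult algebra_simps flip: powr_diff_one_mult[of c \<alpha>])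

lemma bregman_powr_Taylor:
  assumes "0 < x" "0 < y"
  obtains \<xi> where "min x y \<le> \<xi>" "\<xi> \<le> max x y"
    and "bregman_powr \<alpha> x y = \<alpha> * (\<alpha> - 1) / 2 * \<xi> powr (\<alpha> - 2) * (x - y)\<^sup>2"
proof (cases "x = y")
  case True
  then show ?thesis by (intro that[of x]) (auto simp: bregman_powr_def)
next
  case False
  define diff :: "nat \<Rightarrow> real \<Rightarrow> real" where "diff m = (\<lambda>t. if m = 0 then t powr \<alpha>
    else if m = 1 then \<alpha> * t powr (\<alpha> - 1) else \<alpha> * (\<alpha> - 1) * t powr (\<alpha> - 2))" for m
  have "DERIV (diff m) t :> diff (Suc m) t" if "m < 2" "min x y \<le> t" for m t
  proof -
    have "t > 0" using that assms by linarith
    moreover have "\<alpha> - 1 - 1 = \<alpha> - 2" by simp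
    ultimately show ?thesis
      using that by (auto simp: diff_def less_2_cases_iff intro!: derivative_eq_intros)
  qed
  then obtain \<xi> where \<xi>: "min x y < \<xi>" "\<xi> < max x y"
    and "x powr \<alpha> = (\<Sum>m<2. diff m y / fact m * (x - y) ^ m) + diff 2 \<xi> / fact 2 * (x - y)\<^sup>2"
    using Taylor[of 2 diff "\<lambda>t. t powr \<alpha>" "min x y" "max x y" y x] False
    by (auto simp: diff_def split: if_splits)
  then have "x powr \<alpha> = y powr \<alpha> + \<alpha> * y powr (\<alpha> - 1) * (x - y)
      + \<alpha> * (\<alpha> - 1) / 2 * \<xi> powr (\<alpha> - 2) * (x - y)\<^sup>2"
    by (simp add: diff_def numeral_2_eq_2)
  then show ?thesis using \<xi> by (intro that[of \<xi>]) (auto simp: bregman_powr_def)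
qed

lemma bregman_powr_ge_min:
  assumes "2 \<le> \<alpha>" "0 < x" "0 < y"
  shows "\<alpha> * (\<alpha> - 1) / 2 * min x y powr (\<alpha> - 2) * (x - y)\<^sup>2 \<le> bregman_powr \<alpha> x y"
proof -
  obtain \<xi> where "min x y \<le> \<xi>"
    and \<xi>: "bregman_powr \<alpha> x y = \<alpha> * (\<alpha> - 1) / 2 * \<xi> powr (\<alpha> - 2) * (x - y)\<^sup>2"
    using bregman_powr_Taylor[OF assms(2,3)] by blast
  then have "min x y powr (\<alpha> - 2) \<le> \<xi> powr (\<alpha> - 2)"
    using assms by (intro powr_mono2) auto
  then show ?thesis
    unfolding \<xi> using assms by (intro mult_right_mono mult_left_mono) auto
qed

lemma bregman_powr_one_left_ge:
  assumes "2 \<le> \<beta>" "0 < t"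
  shows "(1 - t)\<^sup>2 \<le> bregman_powr \<beta> 1 t"
proof -
  let ?g = "\<lambda>b. bregman_powr b 1 t"
  have t2: "t powr 2 = t * t"
    using assms powr_add[of t 1 1] by simp
  have "?g 2 \<le> ?g \<beta>"
  proof (rule DERIV_nonneg_imp_nondecreasing[OF assms(1)])
    fix b :: real assume "2 \<le> b"
    have "DERIV ?g b :> - (t powr b * ln t) - (t powr (b - 1) + b * (t powr (b - 1) * ln t)) * (1 - t)"
      using assms unfolding bregman_powr_def by (auto intro!: derivative_eq_intros)
    moreover have "- (t powr b * ln t) - (t powr (b - 1) + b * (t powr (b - 1) * ln t)) * (1 - t)
        = t powr (b - 1) * ((t - 1 - ln t) + (b - 1) * ((t - 1) * ln t))"
      using assms by (simp add: algebra_simps flip: powr_diff_one_mult[of t b])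
    moreover have "0 \<le> (t - 1 - ln t) + (b - 1) * ((t - 1) * ln t)"
      using \<open>2 \<le> b\<close> ln_le_minus_one[OF assms(2)] sub_one_mult_ln_nonneg[OF assms(2)] by simp
    ultimately show "\<exists>y. DERIV ?g b :> y \<and> 0 \<le> y" by auto
  qed
  moreover have "?g 2 = (1 - t)\<^sup>2"
    unfolding bregman_powr_def t2 using assms by (simp add: power2_eq_square algebra_simps)
  ultimately show ?thesis by simp
qed

lemma bregman_powr_one_right_ge:
  assumes "2 \<le> \<beta>" "0 < s"
  shows "(\<beta> - 1) * (s - 1)\<^sup>2 \<le> bregman_powr \<beta> s 1"
proof -
  let ?g = "\<lambda>b. bregman_powr b s 1 - (b - 1) * (s - 1)\<^sup>2"
  have s2: "s powr 2 = s * s"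
    using assms powr_add[of s 1 1] by simp
  have "?g 2 \<le> ?g \<beta>"
  proof (rule DERIV_nonneg_imp_nondecreasing[OF assms(1)])
    fix b :: real assume "2 \<le> b"
    have "DERIV ?g b :> s powr b * ln s - (s - 1) - (s - 1)\<^sup>2"
      using assms unfolding bregman_powr_def by (auto intro!: derivative_eq_intros)
    moreover have "s powr b * ln s - (s - 1) - (s - 1)\<^sup>2
        = (s powr b - s powr 2) * ln s + s * (s * ln s - (s - 1))"
      unfolding s2 by (simp add: power2_eq_square algebra_simps)
    moreover have "0 \<le> (s powr b - s powr 2) * ln s"
      using \<open>2 \<le> b\<close> assms by (intro powr_sub_mult_ln_nonneg)
    moreover have "0 \<le> s * (s * ln s - (s - 1))"
      using assms mult_ln_ge_sub_one[of s] by simp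
    ultimately show "\<exists>y. DERIV ?g b :> y \<and> 0 \<le> y" by auto
  qed
  moreover have "?g 2 = 0"
    unfolding bregman_powr_def s2 by (simp add: power2_eq_square algebra_simps)
  ultimately show ?thesis by simp
qed

lemma bregman_powr_ge_left:
  assumes "2 \<le> \<alpha>" "0 < x" "0 < y"
  shows "x powr (\<alpha> - 2) * (x - y)\<^sup>2 \<le> bregman_powr \<alpha> x y"
proof -
  have "x powr (\<alpha> - 2) * (x - y)\<^sup>2 = x powr \<alpha> * (1 - y / x)\<^sup>2"
    using assms by (simp add: powr_diff power2_eq_square field_simps)
  also have "\<dots> \<le> x powr \<alpha> * bregman_powr \<alpha> 1 (y / x)"
    using assms by (intro mult_left_mono bregman_powr_one_left_ge) auto
  also have "\<dots> = bregman_powr \<alpha> x y"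
    using bregman_powr_scale[of x 1 "y / x" \<alpha>] assms by simp
  finally show ?thesis .
qed

lemma bregman_powr_ge_right:
  assumes "2 \<le> \<alpha>" "0 < x" "0 < y"
  shows "(\<alpha> - 1) * y powr (\<alpha> - 2) * (x - y)\<^sup>2 \<le> bregman_powr \<alpha> x y"
proof -
  have "(\<alpha> - 1) * y powr (\<alpha> - 2) * (x - y)\<^sup>2 = y powr \<alpha> * ((\<alpha> - 1) * (x / y - 1)\<^sup>2)"
    using assms by (simp add: powr_diff power2_eq_square field_simps)
  also have "\<dots> \<le> y powr \<alpha> * bregman_powr \<alpha> (x / y) 1"
    using assms by (intro mult_left_mono bregman_powr_one_right_ge) auto
  also have "\<dots> = bregman_powr \<alpha> x y"
    using bregman_powr_scale[of y "x / y" 1 \<alpha>] assms by simp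
  finally show ?thesis .
qed

lemma C2K_mult_le:
  assumes "a + b = K"
  shows "4 * C2K K * (real a * real b) \<le> real K"
proof (cases "a = 0 \<or> b = 0")
  case False
  have K: "real K = real a + real b" using assms by simp
  have sq: "4 * (real a * real b) = (real K)\<^sup>2 - (real a - real b)\<^sup>2"
    unfolding K by (simp add: power2_eq_square algebra_simps)
  show ?thesis
  proof (cases "even K")
    case True
    then show ?thesis using sq by (simp add: C2K_def power2_eq_square divide_le_eq)
  next
    case odd: False
    then have "a \<noteq> b" using assms by auto
    then have "1 \<le> \<bar>real a - real b\<bar>" by linarith
    then have "1 \<le> (real a - real b)\<^sup>2" using one_le_power[of "\<bar>real a - real b\<bar>" 2] by simp
    then have le: "4 * (real a * real b) \<le> (real K)\<^sup>2 - 1" using sq by linarith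
    moreover have "4 \<le> 4 * (real a * real b)"
      using False by (simp flip: of_nat_mult)
    ultimately have pos: "0 < (real K)\<^sup>2 - 1" by linarith
    have "4 * C2K K * (real a * real b) = real K * (4 * (real a * real b)) / ((real K)\<^sup>2 - 1)"
      using odd by (auto simp: C2K_def power2_eq_square)
    also have "\<dots> \<le> real K * ((real K)\<^sup>2 - 1) / ((real K)\<^sup>2 - 1)"
      using le pos by (intro divide_right_mono mult_left_mono) auto
    also have "\<dots> = real K" using pos by simp
    finally show ?thesis .
  qed
qed auto

lemma C2K_sum_abs_squared_le:
  fixes d :: "'a \<Rightarrow> real"
  assumes "finite I" "(\<Sum>k\<in>I. d k) = 0"
  shows "C2K (card I) * (\<Sum>k\<in>I. \<bar>d k\<bar>)\<^sup>2 \<le> (\<Sum>k\<in>I. (d k)\<^sup>2)"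
proof -
  define P where "P = {k \<in> I. 0 < d k}"
  define N where "N = I - P"
  have "P \<subseteq> I" "finite P" using assms(1) by (auto simp: P_def)
  then have split: "sum f I = sum f P + sum f N" for f :: "'a \<Rightarrow> real"
    unfolding N_def using sum.subset_diff[of P I f] assms(1) by simp
  have card: "card P + card N = card I"
    unfolding N_def using \<open>P \<subseteq> I\<close> \<open>finite P\<close> assms(1) by (simp add: card_Diff_subset card_mono)
  define S where "S = sum d P"
  have sum_N: "sum d N = - S" using split[of d] assms(2) by (simp add: S_def)
  have abs_P: "sum (\<lambda>k. \<bar>d k\<bar>) P = S"
    unfolding S_def by (rule sum.cong) (auto simp: P_def)
  have "sum (\<lambda>k. \<bar>d k\<bar>) N = sum (\<lambda>k. - d k) N"
    by (rule sum.cong) (auto simp: N_def P_def)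
  then have abs_N: "sum (\<lambda>k. \<bar>d k\<bar>) N = S"
    using sum_N by (simp add: sum_negf)
  have l1: "(\<Sum>k\<in>I. \<bar>d k\<bar>) = 2 * S"
    using split[of "\<lambda>k. \<bar>d k\<bar>"] abs_P abs_N by simp
  define X where "X = (\<Sum>k\<in>P. (d k)\<^sup>2)"
  define Y where "Y = (\<Sum>k\<in>N. (d k)\<^sup>2)"
  have "0 \<le> X" "0 \<le> Y" by (auto simp: X_def Y_def intro: sum_nonneg)
  have CS_P: "S\<^sup>2 \<le> X * card P"
    using sum_squared_le_sum_of_squares[of d P] by (simp add: S_def X_def)
  have CS_N: "S\<^sup>2 \<le> Y * card N"
    using sum_squared_le_sum_of_squares[of d N] sum_N by (simp add: Y_def)
  have "4 * C2K (card I) * S\<^sup>2 \<le> X + Y"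
  proof (cases "card P = 0 \<or> card N = 0")
    case True
    then show ?thesis using CS_P CS_N \<open>0 \<le> X\<close> \<open>0 \<le> Y\<close> by auto
  next
    case False
    then have ab: "0 < real (card P) * real (card N)" by simp
    have "4 * C2K (card I) * S\<^sup>2 * (card P * card N) \<le> S\<^sup>2 * card I"
      using mult_left_mono[OF C2K_mult_le[OF card], of "S\<^sup>2"] by (simp add: algebra_simps)
    also have "\<dots> = S\<^sup>2 * card P + S\<^sup>2 * card N"
      by (simp flip: card add: algebra_simps)
    also have "\<dots> \<le> (X + Y) * (card P * card N)"
      using mult_right_mono[OF CS_P, of "card N"] mult_right_mono[OF CS_N, of "card P"]
      by (simp add: algebra_simps)
    finally show ?thesis using ab by (simp add: mult_le_cancel_right_pos)
  qed
  then show ?thesis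
    using split[of "\<lambda>k. (d k)\<^sup>2"] by (simp add: l1 X_def Y_def power2_eq_square algebra_simps)
qed

lemma alpha_div_eq_sum_bregman_powr:
  assumes "\<And>k. k \<in> {1..K} \<Longrightarrow> 0 < q k"
  shows "alpha_div \<alpha> K p q = (\<Sum>k=1..K. bregman_powr \<alpha> (p k) (q k)) / (\<alpha> * (\<alpha> - 1))"
  unfolding alpha_div_def using assms by (simp add: bregman_powr_eq sum_divide_distrib mult.commute)

lemma alpha_div_ge_l1_dist:
  assumes "1 < \<alpha>" "0 \<le> w"
    and "\<And>k. k \<in> {1..K} \<Longrightarrow> 0 < q k"
    and "\<And>k. k \<in> {1..K} \<Longrightarrow> w * (p k - q k)\<^sup>2 \<le> bregman_powr \<alpha> (p k) (q k)"
    and "(\<Sum>k=1..K. p k) = (\<Sum>k=1..K. q k)"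
  shows "w * C2K K / (\<alpha> * (\<alpha> - 1)) * (l1_dist K p q)\<^sup>2 \<le> alpha_div \<alpha> K p q"
proof -
  have "C2K K * (l1_dist K p q)\<^sup>2 \<le> (\<Sum>k=1..K. (p k - q k)\<^sup>2)"
    using C2K_sum_abs_squared_le[of "{1..K}" "\<lambda>k. p k - q k"] assms(5)
    by (simp add: l1_dist_def sum_subtractf)
  then have "w * (C2K K * (l1_dist K p q)\<^sup>2) \<le> (\<Sum>k=1..K. w * (p k - q k)\<^sup>2)"
    using assms(2) by (simp add: mult_left_mono flip: sum_distrib_left)
  also have "\<dots> \<le> (\<Sum>k=1..K. bregman_powr \<alpha> (p k) (q k))"
    by (rule sum_mono) (rule assms(4))
  finally have "w * (C2K K * (l1_dist K p q)\<^sup>2) / (\<alpha> * (\<alpha> - 1))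
      \<le> (\<Sum>k=1..K. bregman_powr \<alpha> (p k) (q k)) / (\<alpha> * (\<alpha> - 1))"
    using assms(1) by (intro divide_right_mono) auto
  also have "\<dots> = alpha_div \<alpha> K p q"
    using alpha_div_eq_sum_bregman_powr[OF assms(3)] by simp
  finally show ?thesis
    by (simp add: mult.assoc)
qed

lemma alpha_div_ge_Min_powr:
  fixes g :: "nat \<Rightarrow> real"
  assumes "2 \<le> \<alpha>" "0 \<le> c"
    and "\<And>k. k \<in> {1..K} \<Longrightarrow> 0 < q k" "\<And>k. k \<in> {1..K} \<Longrightarrow> 0 < g k"
    and "\<And>k. k \<in> {1..K} \<Longrightarrow> c * g k powr (\<alpha> - 2) * (p k - q k)\<^sup>2 \<le> bregman_powr \<alpha> (p k) (q k)"
    and "(\<Sum>k=1..K. p k) = (\<Sum>k=1..K. q k)"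
  shows "c * Min (g ` {1..K}) powr (\<alpha> - 2) * C2K K / (\<alpha> * (\<alpha> - 1)) * (l1_dist K p q)\<^sup>2
    \<le> alpha_div \<alpha> K p q"
proof (rule alpha_div_ge_l1_dist[OF _ _ assms(3) _ assms(6)])
  fix k assume k: "k \<in> {1..K}"
  then have "Min (g ` {1..K}) \<in> g ` {1..K}" by (intro Min_in) auto
  then have "Min (g ` {1..K}) powr (\<alpha> - 2) \<le> g k powr (\<alpha> - 2)"
    using k assms(1,4) by (intro powr_mono2) (auto intro: less_imp_le)
  then have "c * Min (g ` {1..K}) powr (\<alpha> - 2) * (p k - q k)\<^sup>2 \<le> c * g k powr (\<alpha> - 2) * (p k - q k)\<^sup>2"
    using assms(2) by (intro mult_right_mono mult_left_mono) auto
  then show "c * Min (g ` {1..K}) powr (\<alpha> - 2) * (p k - q k)\<^sup>2 \<le> bregman_powr \<alpha> (p k) (q k)"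
    using assms(5)[OF k] by linarith
qed (use assms(1,2) in auto)

theorem proposition3:
  fixes \<alpha> :: real and K :: nat and p q :: "nat \<Rightarrow> real"
  assumes "\<alpha> > 2" and "K \<ge> 3"
    and "p \<in> relint_simplex K" and "q \<in> relint_simplex K"
  shows "alpha_div \<alpha> K p q \<ge>
           (C2K K * (Min ((\<lambda>k. min (p k) (q k)) ` {1..K})) powr (\<alpha> - 2)) / 2
             * (l1_dist K p q)\<^sup>2
     \<and> alpha_div \<alpha> K p q \<ge>
           (C2K K * (2 / (\<alpha> * (\<alpha> - 1))) * (Min (p ` {1..K})) powr (\<alpha> - 2)) / 2
             * (l1_dist K p q)\<^sup>2
     \<and> alpha_div \<alpha> K p q \<ge>
           (C2K K * (2 / \<alpha>) * (Min (q ` {1..K})) powr (\<alpha> - 2)) / 2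
             * (l1_dist K p q)\<^sup>2"
proof -
  have pos: "0 < p k" "0 < q k" if "k \<in> {1..K}" for k
    using assms(3,4) that by (auto simp: relint_simplex_def)
  have sums: "(\<Sum>k=1..K. p k) = (\<Sum>k=1..K. q k)"
    using assms(3,4) by (simp add: relint_simplex_def)
  have \<alpha>: "2 \<le> \<alpha>" using assms(1) by simp
  have c1: "\<alpha> * (\<alpha> - 1) / 2 * M * C / (\<alpha> * (\<alpha> - 1)) = C * M / 2"
    and c2: "1 * M * C / (\<alpha> * (\<alpha> - 1)) = C * (2 / (\<alpha> * (\<alpha> - 1))) * M / 2"
    and c3: "(\<alpha> - 1) * M * C / (\<alpha> * (\<alpha> - 1)) = C * (2 / \<alpha>) * M / 2" for M C :: real
    using assms(1) by (simp_all add: field_simps)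
  note bound = alpha_div_ge_Min_powr[OF \<alpha> _ pos(2) _ _ sums]
  have "\<alpha> * (\<alpha> - 1) / 2 * Min ((\<lambda>k. min (p k) (q k)) ` {1..K}) powr (\<alpha> - 2) * C2K K
      / (\<alpha> * (\<alpha> - 1)) * (l1_dist K p q)\<^sup>2 \<le> alpha_div \<alpha> K p q"
    using \<alpha> pos by (intro bound bregman_powr_ge_min) auto
  moreover have "1 * Min (p ` {1..K}) powr (\<alpha> - 2) * C2K K
      / (\<alpha> * (\<alpha> - 1)) * (l1_dist K p q)\<^sup>2 \<le> alpha_div \<alpha> K p q"
    using \<alpha> pos by (intro bound) (auto intro: bregman_powr_ge_left)
  moreover have "(\<alpha> - 1) * Min (q ` {1..K}) powr (\<alpha> - 2) * C2K K
      / (\<alpha> * (\<alpha> - 1)) * (l1_dist K p q)\<^sup>2 \<le> alpha_div \<alpha> K p q"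
    using \<alpha> pos by (intro bound bregman_powr_ge_right) auto
  ultimately show ?thesis
    unfolding c1 c2 c3 by blast
qed

end
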